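(* Let $\Pi$ be a protocol on a memory set $M$ with $|M|=m$, having $n>2$ absorbing memory states, and let $\sigma\in\mathrm{br}(\Pi)$. Then there exists a protocol $\Pi'$ on some $M'\subset M$ with $|M'|=m-1$, having $n-1$ absorbing memory states, such that $U^R(\Pi)=U^R(\Pi')$ and the restriction of $\sigma$ to $M'\times\Theta$ is a best response to $\Pi'$.
   Context: Setting. The state of nature is $\theta\in\Theta=\{H,L\}$ with prior $\Pr(\theta=H)=p\in(0,1)$. A sender privately observes $\theta$; a receiver does not. $S$ is a finite signal set; conditional on $\theta$, signals are i.i.d. with distribution $\pi_\theta$ on $S$, where $\pi_\theta(s)>0$ for all $s\in S,\theta\in\Theta$, and $\pi_H\neq\pi_L$. The receiver has a finite set of memory states $M$ and chooses a protocol $\Pi=(f,g,a)$: a transition function $f:M\times S\to\Delta(M)$ ($f(i,s)(j)$ is the probability of moving from memory state $i$ to $j$ after signal $s$), an initial distribution $g\in\Delta(M)$ of $m_0$, and an action rule $a:M\to[0,1]$ (probability of action $H$ if the game ends in that memory state). A sender strategy is $\sigma:M\times\Theta\to[0,1]$, the probability of stopping in the current memory state given $\theta$. Timing: $m_0\sim g$; in each period $t=0,1,\dots$, with current memory state $m_t$, the game ends if $m_t$ is absorbing ($f(m_t,s)(m_t)=1$ for all $s$); otherwise the sender stops with probability $\sigma(m_t,\theta)$, ending the game; if not stopped, a signal $s_t\sim\pi_\theta$ is generated and $m_{t+1}\sim f(m_t,s_t)$. When the game ends in state $m_t$ the receiver takes action $H$ with probability $a(m_t)$ and $L$ otherwise.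 The receiver's payoff is $1$ if the action equals $\theta$ and $0$ otherwise; the sender's payoff is $1$ if the action is $H$ and $0$ otherwise; there is no discounting; if the game never ends both get $0$. $U^S(\Pi,\sigma),U^R(\Pi,\sigma)$ denote expected payoffs, $\mathrm{br}(\Pi)=\arg\sup_\sigma U^S(\Pi,\sigma)$ is the set of sender best responses, and $U^R(\Pi):=U^R(\Pi,\sigma)$ for $\sigma\in\mathrm{br}(\Pi)$. Since $\pi_\theta$ has full support, which transitions $i\to j$ have positive probability does not depend on $\theta$; the terms absorbing, transient, recurrent communicating class applied to $\Pi$ refer to the Markov chain on $M$ induced by $f$ with signals drawn from $\pi_\theta$ (sender never stopping), and mean the same for both $\theta$. *)

theory Defs
  imports "HOL-Analysis.Analysis"
begin

datatype theta = H | L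

definition valid_signals :: "'s set \<Rightarrow> (theta \<Rightarrow> 's \<Rightarrow> real) \<Rightarrow> bool" where
  "valid_signals S \<pi> \<longleftrightarrow> finite S \<and>
     (\<forall>\<theta>. \<forall>s\<in>S. \<pi> \<theta> s > 0) \<and> (\<forall>\<theta>. (\<Sum>s\<in>S. \<pi> \<theta> s) = 1) \<and>
     (\<exists>s\<in>S. \<pi> H s \<noteq> \<pi> L s)"

text \<open>A protocol (f, g, a): trans i s j = f(i,s)(j), init = g, act = a.\<close>
record ('m, 's) protocol =
  trans :: "'m \<Rightarrow> 's \<Rightarrow> 'm \<Rightarrow> real"
  init  :: "'m \<Rightarrow> real"
  act   :: "'m \<Rightarrow> real"

definition valid_protocol :: "'m set \<Rightarrow> 's set \<Rightarrow> ('m, 's) protocol \<Rightarrow> bool" where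
  "valid_protocol M S P \<longleftrightarrow> finite M \<and>
     (\<forall>i\<in>M. \<forall>s\<in>S. (\<forall>j\<in>M. trans P i s j \<ge> 0) \<and> (\<Sum>j\<in>M. trans P i s j) = 1) \<and>
     (\<forall>j\<in>M. init P j \<ge> 0) \<and> (\<Sum>j\<in>M. init P j) = 1 \<and>
     (\<forall>i\<in>M. 0 \<le> act P i \<and> act P i \<le> 1)"

definition absorbing :: "'s set \<Rightarrow> ('m, 's) protocol \<Rightarrow> 'm \<Rightarrow> bool" where
  "absorbing S P i \<longleftrightarrow> (\<forall>s\<in>S. trans P i s i = 1)"

definition absorbing_states :: "'m set \<Rightarrow> 's set \<Rightarrow> ('m, 's) protocol \<Rightarrow> 'm set" where
  "absorbing_states M S P = {i\<in>M. absorbing S P i}"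

text \<open>Sender strategy sigma i theta = probability of stopping in memory state i given theta.\<close>
definition strategy :: "'m set \<Rightarrow> ('m \<Rightarrow> theta \<Rightarrow> real) \<Rightarrow> bool" where
  "strategy M \<sigma> \<longleftrightarrow> (\<forall>i\<in>M. \<forall>\<theta>. 0 \<le> \<sigma> i \<theta> \<and> \<sigma> i \<theta> \<le> 1)"

text \<open>reach ... t j: probability (given theta) that the game has not ended before
  period t and the memory state at period t is j.\<close>
primrec reach :: "'m set \<Rightarrow> 's set \<Rightarrow> (theta \<Rightarrow> 's \<Rightarrow> real) \<Rightarrow> ('m, 's) protocol \<Rightarrow>
    ('m \<Rightarrow> theta \<Rightarrow> real) \<Rightarrow> theta \<Rightarrow> nat \<Rightarrow> 'm \<Rightarrow> real" where
  "reach M S \<pi> P \<sigma> \<theta> 0 j = init P j"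
| "reach M S \<pi> P \<sigma> \<theta> (Suc t) j =
     (\<Sum>i\<in>M. if absorbing S P i then 0
             else reach M S \<pi> P \<sigma> \<theta> t i * (1 - \<sigma> i \<theta>) * (\<Sum>s\<in>S. \<pi> \<theta> s * trans P i s j))"

definition end_prob :: "'m set \<Rightarrow> 's set \<Rightarrow> (theta \<Rightarrow> 's \<Rightarrow> real) \<Rightarrow> ('m, 's) protocol \<Rightarrow>
    ('m \<Rightarrow> theta \<Rightarrow> real) \<Rightarrow> theta \<Rightarrow> 'm \<Rightarrow> real" where
  "end_prob M S \<pi> P \<sigma> \<theta> i =
     (\<Sum>t. reach M S \<pi> P \<sigma> \<theta> t i * (if absorbing S P i then 1 else \<sigma> i \<theta>))"

text \<open>Sender's expected payoff U^S(Pi, sigma): probability of action H (prior p on H).\<close>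
definition US :: "'m set \<Rightarrow> 's set \<Rightarrow> (theta \<Rightarrow> 's \<Rightarrow> real) \<Rightarrow> real \<Rightarrow> ('m, 's) protocol \<Rightarrow>
    ('m \<Rightarrow> theta \<Rightarrow> real) \<Rightarrow> real" where
  "US M S \<pi> p P \<sigma> =
     p * (\<Sum>i\<in>M. end_prob M S \<pi> P \<sigma> H i * act P i) +
     (1 - p) * (\<Sum>i\<in>M. end_prob M S \<pi> P \<sigma> L i * act P i)"

text \<open>Receiver's expected payoff U^R(Pi, sigma): probability the action matches theta.\<close>
definition UR :: "'m set \<Rightarrow> 's set \<Rightarrow> (theta \<Rightarrow> 's \<Rightarrow> real) \<Rightarrow> real \<Rightarrow> ('m, 's) protocol \<Rightarrow>
    ('m \<Rightarrow> theta \<Rightarrow> real) \<Rightarrow> real" where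
  "UR M S \<pi> p P \<sigma> =
     p * (\<Sum>i\<in>M. end_prob M S \<pi> P \<sigma> H i * act P i) +
     (1 - p) * (\<Sum>i\<in>M. end_prob M S \<pi> P \<sigma> L i * (1 - act P i))"

definition best_response :: "'m set \<Rightarrow> 's set \<Rightarrow> (theta \<Rightarrow> 's \<Rightarrow> real) \<Rightarrow> real \<Rightarrow>
    ('m, 's) protocol \<Rightarrow> ('m \<Rightarrow> theta \<Rightarrow> real) \<Rightarrow> bool" where
  "best_response M S \<pi> p P \<sigma> \<longleftrightarrow> strategy M \<sigma> \<and>
     (\<forall>\<sigma>'. strategy M \<sigma>' \<longrightarrow> US M S \<pi> p P \<sigma>' \<le> US M S \<pi> p P \<sigma>)"

end

theory Submission imports Defs begin

text \<open>Among three absorbing states the one, k, with the middle action probability satisfies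
  a(k) = \<alpha> a(j1) + (1 - \<alpha>) a(j2) for the other two. Redirecting every transition into k
  (and the initial mass of k) to j1 with probability \<alpha> and to j2 with probability 1 - \<alpha>
  gives a protocol on M - {k} in which, for every sender strategy, the probability of
  ending in j is the old one plus the weight of j times the old probability of ending in k.
  As a is affine in these weights, both players' payoffs are unchanged for every strategy,
  so the receiver's payoff and the sender's best responses carry over.\<close>

definition stop_prob :: "'s set \<Rightarrow> ('m, 's) protocol \<Rightarrow> ('m \<Rightarrow> theta \<Rightarrow> real) \<Rightarrow> theta \<Rightarrow> 'm \<Rightarrow> real" where
  "stop_prob S P \<sigma> \<theta> i = (if absorbing S P i then 1 else \<sigma> i \<theta>)"

lemma reach_cong:
  assumes "\<And>i. i \<in> M \<Longrightarrow> \<not> absorbing S P i \<Longrightarrow> \<sigma>1 i \<theta> = \<sigma>2 i \<theta>"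
  shows "reach M S \<pi> P \<sigma>1 \<theta> t j = reach M S \<pi> P \<sigma>2 \<theta> t j"
  by (induction t arbitrary: j) (auto intro!: sum.cong simp: assms)

lemma US_cong:
  assumes "\<And>i \<theta>. i \<in> M \<Longrightarrow> \<not> absorbing S P i \<Longrightarrow> \<sigma>1 i \<theta> = \<sigma>2 i \<theta>"
  shows "US M S \<pi> p P \<sigma>1 = US M S \<pi> p P \<sigma>2"
proof -
  have "end_prob M S \<pi> P \<sigma>1 \<theta> j = end_prob M S \<pi> P \<sigma>2 \<theta> j" if "j \<in> M" for \<theta> j
    using reach_cong[of M S P \<sigma>1 \<theta> \<sigma>2] assms that by (simp add: end_prob_def)
  then show ?thesis
    unfolding US_def by (metis (no_types, lifting) sum.cong)
qed

lemma absorbing_trans_eq_0: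
  assumes "valid_protocol M S P" "i \<in> M" "j \<in> M" "j \<noteq> i" "absorbing S P i" "s \<in> S"
  shows "trans P i s j = 0"
proof -
  have fin: "finite M" and nonneg: "\<forall>j\<in>M. 0 \<le> trans P i s j"
    and total: "(\<Sum>j\<in>M. trans P i s j) = 1"
    using assms by (auto simp: valid_protocol_def)
  have "(\<Sum>j\<in>M - {i}. trans P i s j) = 0"
    using total sum.remove[OF fin \<open>i \<in> M\<close>, of "trans P i s"] assms(5,6)
    by (simp add: absorbing_def)
  then show ?thesis
    using sum_nonneg_eq_0_iff[of "M - {i}"] fin nonneg assms(3,4) by auto
qed

lemma reach_nonneg:
  assumes "valid_signals S \<pi>" "valid_protocol M S P" "strategy M \<sigma>" "j \<in> M"
  shows "0 \<le> reach M S \<pi> P \<sigma> \<theta> t j"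
  using assms(4)
proof (induction t arbitrary: j)
  case 0
  then show ?case using assms(2) by (simp add: valid_protocol_def)
next
  case (Suc t)
  have "0 \<le> (\<Sum>s\<in>S. \<pi> \<theta> s * trans P i s j)" if "i \<in> M" for i
    using assms(1,2) Suc.prems that
    by (intro sum_nonneg) (simp add: valid_signals_def valid_protocol_def less_imp_le)
  then show ?case
    using Suc.IH assms(3) by (auto simp: strategy_def intro!: sum_nonneg mult_nonneg_nonneg)
qed

text \<open>Mass conservation: what is still running at period t either moves on or ends.\<close>
lemma reach_mass_step:
  assumes "valid_signals S \<pi>" "valid_protocol M S P"
  shows "(\<Sum>j\<in>M. reach M S \<pi> P \<sigma> \<theta> t j) =
     (\<Sum>j\<in>M. reach M S \<pi> P \<sigma> \<theta> (Suc t) j) + (\<Sum>i\<in>M. reach M S \<pi> P \<sigma> \<theta> t i * stop_prob S P \<sigma> \<theta> i)"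
proof -
  have signal_total: "(\<Sum>j\<in>M. \<Sum>s\<in>S. \<pi> \<theta> s * trans P i s j) = 1" if "i \<in> M" for i
  proof -
    have "(\<Sum>j\<in>M. \<Sum>s\<in>S. \<pi> \<theta> s * trans P i s j) = (\<Sum>s\<in>S. \<pi> \<theta> s * (\<Sum>j\<in>M. trans P i s j))"
      by (subst sum.swap) (simp add: sum_distrib_left)
    also have "\<dots> = 1"
      using assms that by (simp add: valid_protocol_def valid_signals_def)
    finally show ?thesis .
  qed
  have next_mass: "(\<Sum>j\<in>M. reach M S \<pi> P \<sigma> \<theta> (Suc t) j) =
      (\<Sum>i\<in>M. if absorbing S P i then 0 else reach M S \<pi> P \<sigma> \<theta> t i * (1 - \<sigma> i \<theta>))"
    unfolding reach.simps
    by (subst sum.swap) (auto intro!: sum.cong simp: sum_distrib_left[symmetric] signal_total)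
  show ?thesis
    unfolding next_mass sum.distrib[symmetric] by (rule sum.cong) (simp_all add: stop_prob_def algebra_simps)
qed

lemma sum_ending_mass_le_1:
  assumes "valid_signals S \<pi>" "valid_protocol M S P" "strategy M \<sigma>"
  shows "(\<Sum>t<N. \<Sum>i\<in>M. reach M S \<pi> P \<sigma> \<theta> t i * stop_prob S P \<sigma> \<theta> i) \<le> 1"
proof -
  let ?ending = "\<lambda>t. \<Sum>i\<in>M. reach M S \<pi> P \<sigma> \<theta> t i * stop_prob S P \<sigma> \<theta> i"
  have "(\<Sum>t<N. ?ending t) = (\<Sum>i\<in>M. init P i) - (\<Sum>i\<in>M. reach M S \<pi> P \<sigma> \<theta> N i)"
  proof (induction N)
    case (Suc N)
    have "(\<Sum>t<Suc N. ?ending t) = (\<Sum>t<N. ?ending t) + ?ending N" by simp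
    with Suc.IH reach_mass_step[OF assms(1,2), of \<sigma> \<theta> N] show ?case by linarith
  qed simp
  moreover have "(\<Sum>i\<in>M. init P i) = 1" using assms(2) by (simp add: valid_protocol_def)
  moreover have "0 \<le> (\<Sum>i\<in>M. reach M S \<pi> P \<sigma> \<theta> N i)"
    using reach_nonneg[OF assms] by (simp add: sum_nonneg)
  ultimately show ?thesis by linarith
qed

lemma summable_reach_absorbing:
  assumes "valid_signals S \<pi>" "valid_protocol M S P" "strategy M \<sigma>"
    and "j \<in> M" "absorbing S P j"
  shows "summable (\<lambda>t. reach M S \<pi> P \<sigma> \<theta> t j)"
proof (rule summableI_nonneg_bounded)
  show "0 \<le> reach M S \<pi> P \<sigma> \<theta> t j" for t
    using reach_nonneg[OF assms(1-4)] .
  have "reach M S \<pi> P \<sigma> \<theta> t j \<le> (\<Sum>i\<in>M. reach M S \<pi> P \<sigma> \<theta> t i * stop_prob S P \<sigma> \<theta> i)" for t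
  proof -
    have "reach M S \<pi> P \<sigma> \<theta> t j = reach M S \<pi> P \<sigma> \<theta> t j * stop_prob S P \<sigma> \<theta> j"
      using assms(5) by (simp add: stop_prob_def)
    also have "\<dots> \<le> (\<Sum>i\<in>M. reach M S \<pi> P \<sigma> \<theta> t i * stop_prob S P \<sigma> \<theta> i)"
      using assms reach_nonneg[OF assms(1-3)]
      by (intro member_le_sum) (auto simp: stop_prob_def strategy_def valid_protocol_def)
    finally show ?thesis .
  qed
  then have "(\<Sum>t<N. reach M S \<pi> P \<sigma> \<theta> t j) \<le>
      (\<Sum>t<N. \<Sum>i\<in>M. reach M S \<pi> P \<sigma> \<theta> t i * stop_prob S P \<sigma> \<theta> i)" for N
    by (intro sum_mono)
  then show "(\<Sum>t<N. reach M S \<pi> P \<sigma> \<theta> t j) \<le> 1" for N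
    by (rule order_trans[OF _ sum_ending_mass_le_1[OF assms(1-3)]])
qed

definition split_weight :: "'m \<Rightarrow> 'm \<Rightarrow> real \<Rightarrow> 'm \<Rightarrow> real" where
  "split_weight j1 j2 \<alpha> j = (if j = j1 then \<alpha> else if j = j2 then 1 - \<alpha> else 0)"

definition merge_absorbing :: "('m, 's) protocol \<Rightarrow> 'm \<Rightarrow> 'm \<Rightarrow> 'm \<Rightarrow> real \<Rightarrow> ('m, 's) protocol" where
  "merge_absorbing P k j1 j2 \<alpha> =
    \<lparr>trans = (\<lambda>i s j. trans P i s j + split_weight j1 j2 \<alpha> j * trans P i s k),
     init = (\<lambda>j. init P j + split_weight j1 j2 \<alpha> j * init P k),
     act = act P\<rparr>"

locale absorbing_merge =
  fixes M :: "'m set" and S :: "'s set" and \<pi> :: "theta \<Rightarrow> 's \<Rightarrow> real" and P :: "('m, 's) protocol"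
    and k j1 j2 :: 'm and \<alpha> :: real
  assumes valid_signals: "valid_signals S \<pi>" and valid_protocol: "valid_protocol M S P"
    and in_M: "k \<in> M" "j1 \<in> M" "j2 \<in> M"
    and distinct: "j1 \<noteq> k" "j2 \<noteq> k" "j1 \<noteq> j2"
    and absorbing: "absorbing S P k" "absorbing S P j1" "absorbing S P j2"
    and weight_bounds: "0 \<le> \<alpha>" "\<alpha> \<le> 1"
    and act_k: "act P k = \<alpha> * act P j1 + (1 - \<alpha>) * act P j2"
begin

abbreviation "w \<equiv> split_weight j1 j2 \<alpha>"
abbreviation "M' \<equiv> M - {k}"
abbreviation "P' \<equiv> merge_absorbing P k j1 j2 \<alpha>"

lemma finite_M: "finite M"
  using valid_protocol by (simp add: valid_protocol_def)

lemma split_weight_nonneg: "0 \<le> w j"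
  using weight_bounds by (simp add: split_weight_def)

lemma split_weight_eq_0: "\<not> absorbing S P i \<Longrightarrow> w i = 0"
  using absorbing by (auto simp: split_weight_def)

lemma sum_split_weight: "(\<Sum>j\<in>M'. w j * f j) = \<alpha> * f j1 + (1 - \<alpha>) * f j2"
proof -
  have "(\<Sum>j\<in>M'. w j * f j) =
      (\<Sum>j\<in>M'. (if j = j1 then \<alpha> * f j1 else 0) + (if j = j2 then (1 - \<alpha>) * f j2 else 0))"
    using distinct by (intro sum.cong) (auto simp: split_weight_def)
  then show ?thesis
    using finite_M in_M distinct by (simp add: sum.distrib)
qed

lemma sum_redirect: "(\<Sum>j\<in>M'. f j + w j * f k) = (\<Sum>j\<in>M. f j)"
  using sum_split_weight[of "\<lambda>_. 1"] sum.remove[OF finite_M in_M(1), of f]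
  by (simp add: sum.distrib sum_distrib_right[symmetric])

lemma absorbing_merge_iff: "i \<in> M' \<Longrightarrow> absorbing S P' i \<longleftrightarrow> absorbing S P i"
  using absorbing absorbing_trans_eq_0[OF valid_protocol _ in_M(1)]
  by (cases "w i = 0") (auto simp: absorbing_def merge_absorbing_def split_weight_def)

lemma absorbing_states_merge: "absorbing_states M' S P' = absorbing_states M S P - {k}"
  using absorbing_merge_iff by (auto simp: absorbing_states_def)

lemma valid_protocol_merge: "valid_protocol M' S P'"
  using valid_protocol finite_M split_weight_nonneg in_M(1)
  by (auto simp: valid_protocol_def merge_absorbing_def sum_redirect add_nonneg_nonneg)

lemma reach_merge:
  "j \<in> M' \<Longrightarrow> reach M' S \<pi> P' \<sigma> \<theta> t j = reach M S \<pi> P \<sigma> \<theta> t j + w j * reach M S \<pi> P \<sigma> \<theta> t k"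
proof (induction t arbitrary: j)
  case 0
  then show ?case by (simp add: merge_absorbing_def)
next
  case (Suc t)
  define flow where "flow i = (if absorbing S P i then 0 else reach M S \<pi> P \<sigma> \<theta> t i * (1 - \<sigma> i \<theta>))" for i
  define to where "to i x = (\<Sum>s\<in>S. \<pi> \<theta> s * trans P i s x)" for i x
  have old: "reach M S \<pi> P \<sigma> \<theta> (Suc t) x = (\<Sum>i\<in>M'. flow i * to i x)" for x
  proof -
    have "reach M S \<pi> P \<sigma> \<theta> (Suc t) x = (\<Sum>i\<in>M. flow i * to i x)"
      unfolding reach.simps by (rule sum.cong) (simp_all add: flow_def to_def)
    also have "\<dots> = (\<Sum>i\<in>M'. flow i * to i x)"
      using sum.remove[OF finite_M in_M(1), of "\<lambda>i. flow i * to i x"] absorbing(1)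
      by (simp add: flow_def)
    finally show ?thesis .
  qed
  have to_merge: "(\<Sum>s\<in>S. \<pi> \<theta> s * trans P' i s j) = to i j + w j * to i k" for i
    by (simp add: to_def merge_absorbing_def algebra_simps sum.distrib sum_distrib_left)
  have "reach M' S \<pi> P' \<sigma> \<theta> (Suc t) j = (\<Sum>i\<in>M'. flow i * (to i j + w j * to i k))"
    unfolding reach.simps
  proof (rule sum.cong[OF refl])
    fix i assume i: "i \<in> M'"
    show "(if absorbing S P' i then 0
        else reach M' S \<pi> P' \<sigma> \<theta> t i * (1 - \<sigma> i \<theta>) * (\<Sum>s\<in>S. \<pi> \<theta> s * trans P' i s j)) =
        flow i * (to i j + w j * to i k)"
      using Suc.IH[OF i] split_weight_eq_0[of i] absorbing_merge_iff[OF i]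
      by (simp add: flow_def to_merge)
  qed
  also have "\<dots> = (\<Sum>i\<in>M'. flow i * to i j) + w j * (\<Sum>i\<in>M'. flow i * to i k)"
    by (simp add: distrib_left sum.distrib sum_distrib_left mult.left_commute)
  also have "\<dots> = reach M S \<pi> P \<sigma> \<theta> (Suc t) j + w j * reach M S \<pi> P \<sigma> \<theta> (Suc t) k"
    by (simp only: old)
  finally show ?case .
qed

lemma end_prob_merge:
  assumes "strategy M \<sigma>" "j \<in> M'"
  shows "end_prob M' S \<pi> P' \<sigma> \<theta> j = end_prob M S \<pi> P \<sigma> \<theta> j + w j * end_prob M S \<pi> P \<sigma> \<theta> k"
proof (cases "w j = 0")
  case True
  then show ?thesis
    using reach_merge[OF assms(2)] absorbing_merge_iff[OF assms(2)] by (simp add: end_prob_def)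
next
  case False
  then have "absorbing S P j" using split_weight_eq_0 by blast
  have summable: "summable (\<lambda>t. reach M S \<pi> P \<sigma> \<theta> t x)" if "x \<in> M" "absorbing S P x" for x
    using summable_reach_absorbing[OF valid_signals valid_protocol assms(1) that] .
  have "end_prob M' S \<pi> P' \<sigma> \<theta> j = (\<Sum>t. reach M S \<pi> P \<sigma> \<theta> t j + w j * reach M S \<pi> P \<sigma> \<theta> t k)"
    using reach_merge[OF assms(2)] absorbing_merge_iff[OF assms(2)] \<open>absorbing S P j\<close>
    by (simp add: end_prob_def)
  also have "\<dots> = (\<Sum>t. reach M S \<pi> P \<sigma> \<theta> t j) + w j * (\<Sum>t. reach M S \<pi> P \<sigma> \<theta> t k)"
    using suminf_add[OF summable[of j] summable_mult[OF summable[OF in_M(1) absorbing(1)]]]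
      suminf_mult[OF summable[OF in_M(1) absorbing(1)]] assms(2) \<open>absorbing S P j\<close>
    by simp
  finally show ?thesis
    using \<open>absorbing S P j\<close> absorbing(1) by (simp add: end_prob_def)
qed

lemma expected_value_merge:
  assumes "strategy M \<sigma>" "g (act P k) = \<alpha> * g (act P j1) + (1 - \<alpha>) * g (act P j2)"
  shows "(\<Sum>j\<in>M'. end_prob M' S \<pi> P' \<sigma> \<theta> j * g (act P' j)) =
    (\<Sum>j\<in>M. end_prob M S \<pi> P \<sigma> \<theta> j * g (act P j))"
proof -
  let ?e = "end_prob M S \<pi> P \<sigma> \<theta>"
  have "(\<Sum>j\<in>M'. end_prob M' S \<pi> P' \<sigma> \<theta> j * g (act P' j)) =
      (\<Sum>j\<in>M'. ?e j * g (act P j) + w j * (?e k * g (act P j)))"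
    using end_prob_merge[OF assms(1)]
    by (intro sum.cong) (auto simp: merge_absorbing_def algebra_simps)
  also have "\<dots> = (\<Sum>j\<in>M'. ?e j * g (act P j)) + ?e k * g (act P k)"
    by (simp only: sum.distrib sum_split_weight assms(2)) (simp add: algebra_simps)
  also have "\<dots> = (\<Sum>j\<in>M. ?e j * g (act P j))"
    using sum.remove[OF finite_M in_M(1), of "\<lambda>j. ?e j * g (act P j)"] by simp
  finally show ?thesis .
qed

lemma US_merge:
  assumes "strategy M \<sigma>"
  shows "US M' S \<pi> p P' \<sigma> = US M S \<pi> p P \<sigma>"
  using expected_value_merge[where g = "\<lambda>a. a", OF assms act_k] by (simp add: US_def)

lemma UR_merge:
  assumes "strategy M \<sigma>"
  shows "UR M' S \<pi> p P' \<sigma> = UR M S \<pi> p P \<sigma>"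
proof -
  have "1 - act P k = \<alpha> * (1 - act P j1) + (1 - \<alpha>) * (1 - act P j2)"
    using act_k by (simp add: algebra_simps)
  from expected_value_merge[where g = "\<lambda>a. 1 - a", OF assms this]
    expected_value_merge[where g = "\<lambda>a. a", OF assms act_k]
  show ?thesis by (simp add: UR_def)
qed

lemma best_response_merge:
  assumes "best_response M S \<pi> p P \<sigma>"
  shows "best_response M' S \<pi> p P' \<sigma>"
  unfolding best_response_def
proof (intro conjI allI impI)
  have \<sigma>: "strategy M \<sigma>" using assms by (simp add: best_response_def)
  then show "strategy M' \<sigma>" by (simp add: strategy_def)
  fix \<sigma>' assume "strategy M' \<sigma>'"
  \<comment> \<open>The value of \<sigma>' at k is unconstrained; since k is absorbing, it does not matter.\<close>
  define \<sigma>'' where "\<sigma>'' = \<sigma>'(k := \<lambda>_. 0)"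
  have "strategy M \<sigma>''" using \<open>strategy M' \<sigma>'\<close> by (auto simp: strategy_def \<sigma>''_def)
  have "US M' S \<pi> p P' \<sigma>' = US M' S \<pi> p P' \<sigma>''"
    by (rule US_cong) (simp add: \<sigma>''_def)
  also have "\<dots> = US M S \<pi> p P \<sigma>''" using US_merge[OF \<open>strategy M \<sigma>''\<close>] .
  also have "\<dots> \<le> US M S \<pi> p P \<sigma>"
    using assms \<open>strategy M \<sigma>''\<close> by (simp add: best_response_def)
  also have "\<dots> = US M' S \<pi> p P' \<sigma>" using US_merge[OF \<sigma>] by simp
  finally show "US M' S \<pi> p P' \<sigma>' \<le> US M' S \<pi> p P' \<sigma>" .
qed

end

lemma obtain_middle_of_three:
  fixes f :: "'a \<Rightarrow> real"
  assumes "card A \<ge> 3"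
  obtains j1 k j2 where "j1 \<in> A" "k \<in> A" "j2 \<in> A" "j1 \<noteq> k" "j2 \<noteq> k" "j1 \<noteq> j2"
    "f j1 \<le> f k" "f k \<le> f j2"
proof -
  obtain T where "T \<subseteq> A" "card T = 3"
    using assms obtain_subset_with_card_n[of 3 A] by auto
  then obtain x y z where xyz: "x \<in> A" "y \<in> A" "z \<in> A" "x \<noteq> y" "y \<noteq> z" "x \<noteq> z"
    by (auto simp: card_3_iff)
  have "f x \<le> f y \<and> f y \<le> f z \<or> f x \<le> f z \<and> f z \<le> f y \<or> f y \<le> f x \<and> f x \<le> f z \<or>
        f y \<le> f z \<and> f z \<le> f x \<or> f z \<le> f x \<and> f x \<le> f y \<or> f z \<le> f y \<and> f y \<le> f x"
    by linarith
  then show ?thesis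
    using that xyz by (elim disjE) metis+
qed

lemma convex_weight_between:
  fixes a b c :: real
  assumes "a \<le> b" "b \<le> c"
  obtains \<alpha> where "0 \<le> \<alpha>" "\<alpha> \<le> 1" "b = \<alpha> * a + (1 - \<alpha>) * c"
proof (cases "a = c")
  case True
  then show ?thesis using assms that[of 1] by simp
next
  case False
  with assms have "c - a > 0" by linarith
  define \<alpha> where "\<alpha> = (c - b) / (c - a)"
  have "0 \<le> \<alpha>" "\<alpha> \<le> 1"
    using assms \<open>c - a > 0\<close> by (auto simp: \<alpha>_def divide_simps)
  moreover have "b = \<alpha> * a + (1 - \<alpha>) * c"
  proof -
    have "\<alpha> * (c - a) = c - b" using \<open>c - a > 0\<close> by (simp add: \<alpha>_def)
    then show ?thesis by (simp add: algebra_simps)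
  qed
  ultimately show ?thesis using that by blast
qed

theorem mainTheorem20:
  fixes M :: "'m set" and S :: "'s set" and \<pi> :: "theta \<Rightarrow> 's \<Rightarrow> real" and p :: real
    and P :: "('m, 's) protocol" and \<sigma> :: "'m \<Rightarrow> theta \<Rightarrow> real"
  assumes "valid_signals S \<pi>"
    and "0 < p" and "p < 1"
    and "valid_protocol M S P"
    and "card (absorbing_states M S P) > 2"
    and "best_response M S \<pi> p P \<sigma>"
  shows "\<exists>M' P'. M' \<subset> M \<and> card M' = card M - 1 \<and> valid_protocol M' S P' \<and>
           card (absorbing_states M' S P') = card (absorbing_states M S P) - 1 \<and>
           UR M S \<pi> p P \<sigma> = UR M' S \<pi> p P' \<sigma> \<and>
           best_response M' S \<pi> p P' \<sigma>"
proof -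
  \<comment> \<open>The payoffs coincide for every strategy and every prior.\<close>
  obtain j1 k j2 where triple: "j1 \<in> absorbing_states M S P" "k \<in> absorbing_states M S P"
      "j2 \<in> absorbing_states M S P" "j1 \<noteq> k" "j2 \<noteq> k" "j1 \<noteq> j2"
    and order: "act P j1 \<le> act P k" "act P k \<le> act P j2"
    using obtain_middle_of_three[of "absorbing_states M S P" "act P"] assms(5) by auto
  obtain \<alpha> where "0 \<le> \<alpha>" "\<alpha> \<le> 1" "act P k = \<alpha> * act P j1 + (1 - \<alpha>) * act P j2"
    using convex_weight_between[OF order] .
  then interpret absorbing_merge M S \<pi> P k j1 j2 \<alpha>
    using assms(1,4) triple by unfold_locales (auto simp: absorbing_states_def)
  have "strategy M \<sigma>" using assms(6) by (simp add: best_response_def)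
  moreover have "finite (absorbing_states M S P)" using finite_M by (simp add: absorbing_states_def)
  ultimately show ?thesis
    using valid_protocol_merge UR_merge best_response_merge[OF assms(6)] absorbing_states_merge
      triple(2) in_M(1) finite_M by (intro exI[of _ M'] exI[of _ P']) auto
qed

end
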